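(* Disjoint Factors can be solved (statically) in $\mathcal{O}(k2^k+kn)$ time.
   Context: Disjoint Factors: given an integer $k$ and a word $w\in\{1,\ldots,k\}^\star$ of length $n$, decide whether there exist pairwise disjoint (contiguous) subwords $w_1,\ldots,w_k$ of $w$ such that each $w_i$ has length at least $2$ and begins and ends with the symbol $i$. Word-RAM model. *)

theory Defs
  imports Main
begin

definition disjoint_factors :: "nat \<Rightarrow> nat list \<Rightarrow> bool" where
  "disjoint_factors k w \<longleftrightarrow>
     (\<exists>s e :: nat \<Rightarrow> nat.
        (\<forall>i\<in>{1..k}. s i < e i \<and> e i < length w \<and> w ! s i = i \<and> w ! e i = i) \<and>
        (\<forall>i\<in>{1..k}. \<forall>j\<in>{1..k}. i \<noteq> j \<longrightarrow> {s i..e i} \<inter> {s j..e j} = {}))"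

type_synonym reg = nat

datatype instr =
    Const reg nat
  | Add reg reg reg
  | Sub reg reg reg          (* r := a - b (truncated) *)
  | Mul reg reg reg
  | Div reg reg reg
  | Mod reg reg reg
  | AndB reg reg reg
  | OrB reg reg reg
  | XorB reg reg reg
  | Shl reg reg reg
  | Shr reg reg reg
  | Less reg reg reg
  | Load reg reg
  | Store reg reg
  | Jmp nat
  | Jz reg nat
  | Halt

record config =
  pc :: nat
  regs :: "nat \<Rightarrow> nat"
  mem :: "nat \<Rightarrow> nat"

definition halted :: "instr list \<Rightarrow> config \<Rightarrow> bool" where
  "halted P c \<longleftrightarrow> pc c \<ge> length P \<or> P ! pc c = Halt"

fun exec :: "instr \<Rightarrow> config \<Rightarrow> config" where
  "exec (Const r v) c = c\<lparr>pc := Suc (pc c), regs := (regs c)(r := v)\<rparr>"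
| "exec (Add r a b) c = c\<lparr>pc := Suc (pc c), regs := (regs c)(r := regs c a + regs c b)\<rparr>"
| "exec (Sub r a b) c = c\<lparr>pc := Suc (pc c), regs := (regs c)(r := regs c a - regs c b)\<rparr>"
| "exec (Mul r a b) c = c\<lparr>pc := Suc (pc c), regs := (regs c)(r := regs c a * regs c b)\<rparr>"
| "exec (Div r a b) c = c\<lparr>pc := Suc (pc c), regs := (regs c)(r := regs c a div regs c b)\<rparr>"
| "exec (Mod r a b) c = c\<lparr>pc := Suc (pc c), regs := (regs c)(r := regs c a mod regs c b)\<rparr>"
| "exec (AndB r a b) c = c\<lparr>pc := Suc (pc c), regs := (regs c)(r := and (regs c a) (regs c b))\<rparr>"
| "exec (OrB r a b) c = c\<lparr>pc := Suc (pc c), regs := (regs c)(r := or (regs c a) (regs c b))\<rparr>"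
| "exec (XorB r a b) c = c\<lparr>pc := Suc (pc c), regs := (regs c)(r := xor (regs c a) (regs c b))\<rparr>"
| "exec (Shl r a b) c = c\<lparr>pc := Suc (pc c), regs := (regs c)(r := regs c a * 2 ^ regs c b)\<rparr>"
| "exec (Shr r a b) c = c\<lparr>pc := Suc (pc c), regs := (regs c)(r := regs c a div 2 ^ regs c b)\<rparr>"
| "exec (Less r a b) c = c\<lparr>pc := Suc (pc c), regs := (regs c)(r := (if regs c a < regs c b then 1 else 0))\<rparr>"
| "exec (Load r a) c = c\<lparr>pc := Suc (pc c), regs := (regs c)(r := mem c (regs c a))\<rparr>"
| "exec (Store a b) c = c\<lparr>pc := Suc (pc c), mem := (mem c)(regs c a := regs c b)\<rparr>"
| "exec (Jmp l) c = c\<lparr>pc := l\<rparr>"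
| "exec (Jz a l) c = (if regs c a = 0 then c\<lparr>pc := l\<rparr> else c\<lparr>pc := Suc (pc c)\<rparr>)"
| "exec Halt c = c"

definition step :: "instr list \<Rightarrow> config \<Rightarrow> config" where
  "step P c = (if halted P c then c else exec (P ! pc c) c)"

definition run :: "instr list \<Rightarrow> nat \<Rightarrow> config \<Rightarrow> config" where
  "run P t c = (step P ^^ t) c"

text \<open>Input encoding: M[0] = k, M[1] = n = length w, M[2+i] = w!i; all other
memory cells and all registers are 0; execution starts at pc 0.  The answer is
read from register 0 on halting (1 = yes, 0 = no).\<close>

definition init_config :: "nat \<Rightarrow> nat list \<Rightarrow> config" where
  "init_config k w = \<lparr>pc = 0, regs = (\<lambda>_. 0),
     mem = (\<lambda>a. if a = 0 then k else if a = 1 then length w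
                 else if a - 2 < length w then w ! (a - 2) else 0)\<rparr>"

text \<open>Word-size restriction: every value held in a register or memory cell
is below the bound B (i.e. words have log B bits).\<close>

definition values_bounded :: "nat \<Rightarrow> config \<Rightarrow> bool" where
  "values_bounded B c \<longleftrightarrow> (\<forall>r. regs c r < B) \<and> (\<forall>a. mem c a < B)"

end

theory Submission
  imports Defs
begin

text \<open>Call \<open>shortest_prefix w S\<close> the least \<open>q\<close> such that the factors for the symbols of
\<open>S\<close> fit disjointly into the first \<open>q\<close> letters of \<open>w\<close>.  In a solution for \<open>S\<close> consider
the factor that ends last, say that of \<open>i\<close>: all other factors lie before its start.
Conversely, a solution for \<open>S - {i}\<close> is extended greedily by the first two occurrences of
\<open>i\<close> behind it.  Hence \<open>shortest_prefix w S\<close> is the minimum over \<open>i \<in> S\<close> of the greedy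
factor end behind \<open>shortest_prefix w (S - {i})\<close>.  With a table of next occurrences
(\<open>O(k n)\<close> entries) each term of the minimum costs \<open>O(1)\<close>, so a dynamic programme over all
\<open>2^k\<close> bitmasks decides the problem in \<open>O(k 2^k + k n)\<close> steps.\<close>

section \<open>Greedy factors and the recursion for shortest prefixes\<close>

function next_occ :: "nat list \<Rightarrow> nat \<Rightarrow> nat \<Rightarrow> nat" where
  "next_occ w i q =
     (if q < length w then if w ! q = i then q else next_occ w i (Suc q) else length w)"
  by pat_completeness auto
termination by (relation "measure (\<lambda>(w, i, q). length w - q)") auto

declare next_occ.simps [simp del]

lemma next_occ_beyond: "length w \<le> q \<Longrightarrow> next_occ w i q = length w"
  by (subst next_occ.simps) simp

lemma next_occ_le_length: "next_occ w i q \<le> length w"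
  by (induction w i q rule: next_occ.induct) (subst next_occ.simps, simp)

lemma next_occ_found:
  "next_occ w i q < length w \<Longrightarrow> q \<le> next_occ w i q \<and> w ! next_occ w i q = i"
proof (induction w i q rule: next_occ.induct)
  case (1 w i q)
  then show ?case
    by (subst (asm) next_occ.simps, subst (1 2) next_occ.simps) (auto split: if_splits)
qed

lemma next_occ_least: "q \<le> j \<Longrightarrow> j < length w \<Longrightarrow> w ! j = i \<Longrightarrow> next_occ w i q \<le> j"
proof (induction w i q rule: next_occ.induct)
  case (1 w i q)
  then show ?case
    by (cases "q = j") (subst next_occ.simps, simp)+
qed

text \<open>The length of the shortest prefix containing a factor of \<open>i\<close> that starts at position
\<open>p\<close> or later; \<open>Suc (length w)\<close> if there is none.\<close>

definition factor_end :: "nat list \<Rightarrow> nat \<Rightarrow> nat \<Rightarrow> nat" where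
  "factor_end w i p = Suc (next_occ w i (Suc (next_occ w i p)))"

lemma factor_end_witness:
  assumes "factor_end w i p \<le> length w"
  obtains a b where "p \<le> a" "a < b" "Suc b = factor_end w i p" "w ! a = i" "w ! b = i"
proof -
  define a where "a = next_occ w i p"
  define b where "b = next_occ w i (Suc a)"
  have "b < length w" using assms by (simp add: factor_end_def a_def b_def)
  then have "Suc a \<le> b" "w ! b = i"
    using next_occ_found[of w i "Suc a"] by (simp_all add: b_def)
  moreover have "p \<le> a" "w ! a = i"
    using next_occ_found[of w i p] \<open>b < length w\<close> calculation by (simp_all add: a_def)
  ultimately show thesis
    by (intro that[of a b]) (simp_all add: factor_end_def a_def b_def)
qed

lemma factor_end_least:
  assumes "p \<le> a" "a < b" "b < length w" "w ! a = i" "w ! b = i"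
  shows "factor_end w i p \<le> Suc b"
proof -
  have "next_occ w i p \<le> a" using assms by (intro next_occ_least) simp_all
  then have "next_occ w i (Suc (next_occ w i p)) \<le> b" using assms by (intro next_occ_least) simp_all
  then show ?thesis by (simp add: factor_end_def)
qed

definition factors_within :: "nat list \<Rightarrow> nat set \<Rightarrow> nat \<Rightarrow> bool" where
  "factors_within w S q \<longleftrightarrow> (\<exists>s e :: nat \<Rightarrow> nat.
     (\<forall>i\<in>S. s i < e i \<and> e i < q \<and> w ! s i = i \<and> w ! e i = i) \<and>
     (\<forall>i\<in>S. \<forall>j\<in>S. i \<noteq> j \<longrightarrow> {s i..e i} \<inter> {s j..e j} = {}))"

lemma disjoint_factors_iff_factors_within:
  "disjoint_factors k w \<longleftrightarrow> factors_within w {1..k} (length w)"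
  unfolding disjoint_factors_def factors_within_def ..

lemma factors_within_mono: "factors_within w S q \<Longrightarrow> q \<le> q' \<Longrightarrow> factors_within w S q'"
  unfolding factors_within_def by (metis order_less_le_trans)

lemma factors_within_empty: "factors_within w {} q"
  by (simp add: factors_within_def)

lemma factors_within_insert:
  assumes "factors_within w S p" "p \<le> a" "a < b" "b < q" "w ! a = i" "w ! b = i"
  shows "factors_within w (insert i S) q"
proof -
  obtain s e where fac: "\<forall>j\<in>S. s j < e j \<and> e j < p \<and> w ! s j = j \<and> w ! e j = j"
    and disj: "\<forall>j\<in>S. \<forall>j'\<in>S. j \<noteq> j' \<longrightarrow> {s j..e j} \<inter> {s j'..e j'} = {}"
    using assms(1) unfolding factors_within_def by blast
  let ?s = "s(i := a)" and ?e = "e(i := b)"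
  have before: "e j < a" if "j \<in> S" for j
    using fac that assms(2) by fastforce
  have "?s j < ?e j \<and> ?e j < q \<and> w ! ?s j = j \<and> w ! ?e j = j" if "j \<in> insert i S" for j
    using fac assms(2-6) that by (cases "j = i") auto
  moreover have "{?s j..?e j} \<inter> {?s j'..?e j'} = {}"
    if "j \<in> insert i S" "j' \<in> insert i S" "j \<noteq> j'" for j j'
  proof (cases "j = i \<or> j' = i")
    case True
    then show ?thesis using that by (auto dest: before)
  next
    case False
    then show ?thesis using that disj by auto
  qed
  ultimately show ?thesis
    unfolding factors_within_def by blast
qed

lemma factors_within_split_last:
  assumes "factors_within w S q" "finite S" "S \<noteq> {}"
  obtains i a b where "i \<in> S" "a < b" "b < q" "w ! a = i" "w ! b = i"
    "factors_within w (S - {i}) a"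
proof -
  obtain s e where fac: "\<forall>j\<in>S. s j < e j \<and> e j < q \<and> w ! s j = j \<and> w ! e j = j"
    and disj: "\<forall>j\<in>S. \<forall>j'\<in>S. j \<noteq> j' \<longrightarrow> {s j..e j} \<inter> {s j'..e j'} = {}"
    using assms(1) unfolding factors_within_def by blast
  have "Max (e ` S) \<in> e ` S" using assms(2,3) by simp
  then obtain i where i: "i \<in> S" "e i = Max (e ` S)" by auto
  have "e j < s i" if "j \<in> S - {i}" for j
  proof (rule ccontr)
    assume "\<not> e j < s i"
    moreover have "e j \<le> e i" using i assms(2) that by simp
    ultimately have "e j \<in> {s i..e i} \<inter> {s j..e j}" using fac that by auto
    then show False using disj i that by blast
  qed
  then have "factors_within w (S - {i}) (s i)"
    unfolding factors_within_def using fac disj by (intro exI[of _ s] exI[of _ e]) auto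
  then show thesis using fac i by (intro that[of i "s i" "e i"]) auto
qed

text \<open>The value \<open>Suc (length w)\<close> stands for ``no prefix suffices''.\<close>

definition shortest_prefix :: "nat list \<Rightarrow> nat set \<Rightarrow> nat" where
  "shortest_prefix w S =
     (LEAST q. q = Suc (length w) \<or> q \<le> length w \<and> factors_within w S q)"

lemma shortest_prefix_le: "shortest_prefix w S \<le> Suc (length w)"
  unfolding shortest_prefix_def by (rule Least_le) simp

lemma shortest_prefix_least:
  "factors_within w S q \<Longrightarrow> q \<le> length w \<Longrightarrow> shortest_prefix w S \<le> q"
  unfolding shortest_prefix_def by (rule Least_le) simp

lemma shortest_prefix_factors_within:
  "shortest_prefix w S \<le> length w \<Longrightarrow> factors_within w S (shortest_prefix w S)"
  using LeastI[of "\<lambda>q. q = Suc (length w) \<or> q \<le> length w \<and> factors_within w S q" "Suc (length w)"]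
  unfolding shortest_prefix_def by auto

lemma shortest_prefix_empty: "shortest_prefix w {} = 0"
  using shortest_prefix_least[of w "{}" 0] factors_within_empty by simp

lemma disjoint_factors_iff_shortest_prefix:
  "disjoint_factors k w \<longleftrightarrow> shortest_prefix w {1..k} \<le> length w"
  unfolding disjoint_factors_iff_factors_within
  using shortest_prefix_least shortest_prefix_factors_within factors_within_mono by blast

lemma shortest_prefix_le_factor_end:
  assumes "i \<in> S"
  shows "shortest_prefix w S \<le> factor_end w i (shortest_prefix w (S - {i}))"
proof (cases "factor_end w i (shortest_prefix w (S - {i})) \<le> length w")
  case True
  then obtain a b where ab: "shortest_prefix w (S - {i}) \<le> a" "a < b"
    "Suc b = factor_end w i (shortest_prefix w (S - {i}))" "w ! a = i" "w ! b = i"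
    by (rule factor_end_witness)
  then have "factors_within w (S - {i}) (shortest_prefix w (S - {i}))"
    using True by (intro shortest_prefix_factors_within) simp
  then have "factors_within w (insert i (S - {i})) (Suc b)"
    using ab by (intro factors_within_insert[of _ _ _ a b]) simp_all
  then have "shortest_prefix w S \<le> Suc b"
    using True ab by (intro shortest_prefix_least) (simp_all add: insert_absorb assms)
  then show ?thesis using ab by simp
next
  case False
  then show ?thesis using shortest_prefix_le[of w S] by simp
qed

lemma factor_end_le_shortest_prefix:
  assumes "finite S" "S \<noteq> {}" "shortest_prefix w S \<le> length w"
  obtains i where "i \<in> S" "factor_end w i (shortest_prefix w (S - {i})) \<le> shortest_prefix w S"
proof -
  obtain i a b where iab: "i \<in> S" "a < b" "b < shortest_prefix w S" "w ! a = i" "w ! b = i"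
    and rest: "factors_within w (S - {i}) a"
    using factors_within_split_last[OF shortest_prefix_factors_within[OF assms(3)] assms(1,2)] .
  have "shortest_prefix w (S - {i}) \<le> a"
    using rest iab assms(3) by (intro shortest_prefix_least) simp_all
  then have "factor_end w i (shortest_prefix w (S - {i})) \<le> Suc b"
    using iab assms(3) by (intro factor_end_least) simp_all
  then show thesis using iab by (intro that[of i]) simp_all
qed

lemma shortest_prefix_rec:
  assumes "finite S" "S \<noteq> {}"
  shows "shortest_prefix w S =
    Min (insert (Suc (length w)) ((\<lambda>i. factor_end w i (shortest_prefix w (S - {i}))) ` S))"
    (is "_ = Min ?M")
proof (rule antisym)
  show "shortest_prefix w S \<le> Min ?M"
    using assms shortest_prefix_le shortest_prefix_le_factor_end by (simp add: Min_ge_iff)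
  show "Min ?M \<le> shortest_prefix w S"
  proof (cases "shortest_prefix w S \<le> length w")
    case True
    then obtain i where "i \<in> S" "factor_end w i (shortest_prefix w (S - {i})) \<le> shortest_prefix w S"
      using factor_end_le_shortest_prefix assms by blast
    moreover from \<open>i \<in> S\<close> have "Min ?M \<le> factor_end w i (shortest_prefix w (S - {i}))"
      using assms by (intro Min_le) auto
    ultimately show ?thesis by simp
  next
    case False
    then show ?thesis using assms shortest_prefix_le[of w S] by (intro Min_le) auto
  qed
qed

section \<open>Sets of symbols as bitmasks\<close>

definition mask_symbols :: "nat \<Rightarrow> nat set" where
  "mask_symbols m = Suc ` {i. bit m i}"

lemma mask_symbols_0: "mask_symbols 0 = {}"
  by (simp add: mask_symbols_def)

lemma mask_symbols_full: "mask_symbols (2 ^ k - 1) = {1..k}"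
proof -
  have "(2 ^ k - 1 :: nat) = mask k"
    by (simp add: mask_eq_exp_minus_1)
  then have "{i. bit (2 ^ k - 1 :: nat) i} = {..<k}"
    by (auto simp: bit_mask_iff)
  then show ?thesis
    by (simp add: mask_symbols_def lessThan_atLeast0 atLeastLessThanSuc_atLeastAtMost)
qed

lemma bit_nat_eq_unset_bit_add_exp: "bit (m :: nat) i \<Longrightarrow> m = unset_bit i m + 2 ^ i"
proof -
  assume "bit m i"
  then have "m = set_bit i (unset_bit i m)"
    by (auto intro: bit_eqI simp: bit_simps)
  also have "\<dots> = unset_bit i m + 2 ^ i"
    by (simp add: set_bit_eq bit_simps)
  finally show ?thesis .
qed

lemma mask_symbols_diff:
  assumes "bit m i"
  shows "mask_symbols (m - 2 ^ i) = mask_symbols m - {Suc i}"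
proof -
  have "m - 2 ^ i = unset_bit i m"
    using bit_nat_eq_unset_bit_add_exp[OF assms] by linarith
  then show ?thesis
    by (auto simp: mask_symbols_def bit_simps)
qed

fun best_split :: "nat list \<Rightarrow> nat \<Rightarrow> nat \<Rightarrow> nat" where
  "best_split w m 0 = Suc (length w)"
| "best_split w m (Suc j) =
     (if bit m j
      then min (best_split w m j) (factor_end w (Suc j) (shortest_prefix w (mask_symbols (m - 2 ^ j))))
      else best_split w m j)"

lemma best_split_eq_Min:
  "best_split w m j = Min (insert (Suc (length w))
     ((\<lambda>i. factor_end w (Suc i) (shortest_prefix w (mask_symbols (m - 2 ^ i)))) ` {i. i < j \<and> bit m i}))"
proof (induction j)
  case (Suc j)
  let ?f = "\<lambda>i. factor_end w (Suc i) (shortest_prefix w (mask_symbols (m - 2 ^ i)))"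
  show ?case
  proof (cases "bit m j")
    case True
    then have "insert (Suc (length w)) (?f ` {i. i < Suc j \<and> bit m i}) =
        insert (?f j) (insert (Suc (length w)) (?f ` {i. i < j \<and> bit m i}))"
      by (auto simp: less_Suc_eq)
    then show ?thesis using Suc True by (simp add: min.commute)
  next
    case False
    then have "{i. i < Suc j \<and> bit m i} = {i. i < j \<and> bit m i}"
      by (auto simp: less_Suc_eq)
    then show ?thesis using Suc False by simp
  qed
qed simp

lemma best_split_eq_shortest_prefix:
  assumes "0 < m" "m < 2 ^ k"
  shows "best_split w m k = shortest_prefix w (mask_symbols m)"
proof -
  let ?f = "\<lambda>i. factor_end w (Suc i) (shortest_prefix w (mask_symbols (m - 2 ^ i)))"
  have bits: "{i. i < k \<and> bit m i} = {i. bit m i}"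
    using assms(2) by (metis bit_take_bit_iff take_bit_nat_eq_self_iff)
  have symbols: "mask_symbols m = Suc ` {i. bit m i}"
    by (simp add: mask_symbols_def)
  have "finite (mask_symbols m)"
    using bits symbols by (metis finite_Collect_conjI finite_imageI finite_lessThan lessThan_def)
  moreover have "mask_symbols m \<noteq> {}"
  proof
    assume "mask_symbols m = {}"
    then have "m = 0" by (intro bit_eqI) (simp add: symbols)
    with assms(1) show False by simp
  qed
  ultimately have "shortest_prefix w (mask_symbols m) = Min (insert (Suc (length w))
      ((\<lambda>i. factor_end w i (shortest_prefix w (mask_symbols m - {i}))) ` mask_symbols m))"
    by (rule shortest_prefix_rec)
  also have "(\<lambda>i. factor_end w i (shortest_prefix w (mask_symbols m - {i}))) ` mask_symbols m =
      ?f ` {i. bit m i}"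
    unfolding symbols image_image by (rule image_cong) (simp_all add: mask_symbols_diff symbols)
  finally show ?thesis
    by (simp add: best_split_eq_Min bits)
qed

section \<open>Bounded runs of Word-RAM programs\<close>

definition runs_to :: "instr list \<Rightarrow> nat \<Rightarrow> nat \<Rightarrow> config \<Rightarrow> (config \<Rightarrow> bool) \<Rightarrow> bool" where
  "runs_to P B t c Q \<longleftrightarrow> (\<exists>t'\<le>t. Q (run P t' c) \<and> (\<forall>j\<le>t'. values_bounded B (run P j c)))"

lemma run_0 [simp]: "run P 0 c = c"
  by (simp add: run_def)

lemma run_Suc: "run P (Suc t) c = run P t (step P c)"
  unfolding run_def funpow_Suc_right comp_def ..

lemma run_add: "run P (s + t) c = run P t (run P s c)"
  unfolding run_def add.commute[of s] funpow_add comp_def ..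

lemma runs_to_done: "values_bounded B c \<Longrightarrow> Q c \<Longrightarrow> runs_to P B t c Q"
  unfolding runs_to_def by (intro exI[of _ 0]) simp

lemma runs_to_step:
  assumes "values_bounded B c" "\<not> halted P c" "runs_to P B t (exec (P ! pc c) c) Q"
  shows "runs_to P B (Suc t) c Q"
proof -
  have step: "step P c = exec (P ! pc c) c"
    using assms(2) by (simp add: step_def)
  obtain t' where t': "t' \<le> t" "Q (run P t' (step P c))"
    "\<forall>j\<le>t'. values_bounded B (run P j (step P c))"
    using assms(3) unfolding runs_to_def step by blast
  have "values_bounded B (run P j c)" if "j \<le> Suc t'" for j
    using that t'(3) assms(1) by (cases j) (simp_all add: run_Suc)
  then show ?thesis
    unfolding runs_to_def using t' by (intro exI[of _ "Suc t'"]) (simp add: run_Suc)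
qed

lemma runs_to_trans:
  assumes "runs_to P B s c R" "\<And>c'. R c' \<Longrightarrow> runs_to P B t c' Q"
  shows "runs_to P B (s + t) c Q"
proof -
  obtain s' where s': "s' \<le> s" "R (run P s' c)" "\<forall>j\<le>s'. values_bounded B (run P j c)"
    using assms(1) unfolding runs_to_def by blast
  obtain t' where t': "t' \<le> t" "Q (run P t' (run P s' c))"
    "\<forall>j\<le>t'. values_bounded B (run P j (run P s' c))"
    using assms(2)[OF s'(2)] unfolding runs_to_def by blast
  have "values_bounded B (run P j c)" if "j \<le> s' + t'" for j
  proof (cases "j \<le> s'")
    case False
    then have "j = s' + (j - s')" "j - s' \<le> t'" using that by simp_all
    then show ?thesis using t'(3) by (metis run_add)
  qed (use s'(3) in simp)
  then show ?thesis
    unfolding runs_to_def using s' t' by (intro exI[of _ "s' + t'"]) (simp add: run_add)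
qed

lemma runs_to_mono:
  "runs_to P B s c Q \<Longrightarrow> s \<le> t \<Longrightarrow> (\<And>c. Q c \<Longrightarrow> Q' c) \<Longrightarrow> runs_to P B t c Q'"
  unfolding runs_to_def by (meson order_trans)

lemma runs_to_loop:
  assumes "\<And>n c. I (Suc n) c \<Longrightarrow> runs_to P B t c (I n)"
    and "\<And>c. I 0 c \<Longrightarrow> runs_to P B t0 c Q"
  shows "I n c \<Longrightarrow> runs_to P B (t * n + t0) c Q"
proof (induction n arbitrary: c)
  case (Suc n)
  have "runs_to P B (t + (t * n + t0)) c Q"
    using assms(1)[OF Suc.prems] Suc.IH by (rule runs_to_trans)
  then show ?case by (simp add: add.assoc)
qed (use assms(2) in simp)

lemma runs_to_loop_upto:
  assumes "\<And>i c. i < N \<Longrightarrow> I i c \<Longrightarrow> runs_to P B t c (I (Suc i))"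
    and "\<And>c. I N c \<Longrightarrow> runs_to P B t0 c Q"
    and "i \<le> N" "I i c"
  shows "runs_to P B (t * (N - i) + t0) c Q"
proof -
  let ?J = "\<lambda>n c. n \<le> N \<and> I (N - n) c"
  have "runs_to P B t c (?J n)" if "?J (Suc n) c" for n c
    using assms(1)[of "N - Suc n" c] that by (auto simp: Suc_diff_Suc intro: runs_to_mono)
  moreover have "runs_to P B t0 c Q" if "?J 0 c" for c
    using assms(2) that by simp
  ultimately show ?thesis
    using runs_to_loop[of ?J P B t t0 Q "N - i" c] assms(3,4) by simp
qed

section \<open>The program and its loop invariants\<close>

definition word_bound :: "nat \<Rightarrow> nat list \<Rightarrow> nat" where
  "word_bound k w = (2 + length w + 2 ^ k) ^ 100"

definition row_base :: "nat list \<Rightarrow> nat \<Rightarrow> nat" where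
  "row_base w i = (i + 1) * (length w + 2)"

lemma row_base_Suc: "row_base w (Suc i) = row_base w i + length w + 2"
  by (simp add: row_base_def)

lemma row_base_mono: "i \<le> j \<Longrightarrow> row_base w i \<le> row_base w j"
  unfolding row_base_def by (intro mult_le_mono1) simp

lemma row_base_ge: "1 \<le> i \<Longrightarrow> length w + 2 \<le> row_base w i"
  by (simp add: row_base_def)

lemma word_bound_gt:
  "Suc (Suc k) < word_bound k w" "2 ^ k + row_base w (Suc k) + length w + 2 < word_bound k w"
proof -
  let ?a = "length w + 2" and ?b = "2 ^ k :: nat"
  have "?b + row_base w (Suc k) + ?a = (k + 1) * ?a + 2 * ?a + ?b"
    by (simp add: row_base_def algebra_simps)
  also have "\<dots> \<le> ?b * ?a + ?a * ?a + ?b"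
    using less_exp[of k] by (intro add_mono mult_mono) (simp_all add: Suc_le_eq)
  also have "\<dots> < (?a + ?b) ^ 2"
    by (simp add: power2_eq_square algebra_simps)
  also have "\<dots> \<le> (?a + ?b) ^ 100"
    by (rule power_increasing) simp_all
  finally have "?b + row_base w (Suc k) + ?a < word_bound k w"
    by (simp add: word_bound_def ac_simps)
  moreover have "k < ?b" by simp
  ultimately show "Suc (Suc k) < word_bound k w" "?b + row_base w (Suc k) + length w + 2 < word_bound k w"
    by (simp_all add: row_base_def)
qed

text \<open>Memory layout, with \<open>n = length w\<close>: cells 0 and 1 hold \<open>k\<close> and \<open>n\<close>, cells
\<open>2 .. n + 1\<close> the word.  For \<open>1 \<le> i \<le> k\<close> the \<open>n + 2\<close> cells from \<open>row_base w i\<close> on hold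
\<open>next_occ w i q\<close> for \<open>q \<le> n + 1\<close>; cell \<open>row_base w (k + 1) + S\<close> of the table holds
\<open>shortest_prefix w (mask_symbols S)\<close>.

Registers 1, 2, 3, 4, 11, 17, 20 hold the constants \<open>k\<close>, \<open>n\<close>, \<open>n + 2\<close>, 1,
\<open>row_base w (k + 1)\<close>, 2, 0.  Instructions 8--34 fill the rows: the loop at 8 runs over the
symbol \<open>i\<close> (register 5), the loop at 18 scans the word from right to left (position in
register 6, \<open>row_base w i\<close> in register 7).  Instructions 35--67 fill the table: the loop at
38 runs over the masks \<open>S\<close> (register 12, with \<open>2^k\<close> in register 13), the loop at 42 over
the bits \<open>j\<close> of \<open>S\<close> (register 15), keeping \<open>best_split w S j\<close> in register 14.
Instructions 68--72 compare the entry of the full mask with \<open>n\<close>.\<close>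

definition prog :: "instr list" where
  "prog = [Load 1 0,
    Const 4 1,
    Load 2 4,
    Const 17 2,
    Add 3 2 17,
    Add 5 1 17,
    Mul 11 5 3,
    Const 5 1,
    Less 9 1 5,
    Jz 9 11,
    Jmp 35,
    Add 10 5 4,
    Mul 7 10 3,
    Add 8 7 2,
    Store 8 2,
    Add 8 8 4,
    Store 8 2,
    Add 6 2 20,
    Jz 6 33,
    Sub 6 6 4,
    Add 8 6 17,
    Load 9 8,
    Sub 10 9 5,
    Sub 9 5 9,
    Add 9 9 10,
    Add 8 7 6,
    Jz 9 30,
    Add 10 8 4,
    Load 9 10,
    Jmp 31,
    Add 9 6 20,
    Store 8 9,
    Jmp 18,
    Add 5 5 4,
    Jmp 8,
    Store 11 20,
    Shl 13 4 1,
    Const 12 1,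
    Less 9 12 13,
    Jz 9 68,
    Add 14 2 4,
    Const 15 0,
    Less 9 15 1,
    Jz 9 64,
    Shr 9 12 15,
    AndB 9 9 4,
    Jz 9 62,
    Shl 16 4 15,
    Sub 10 12 16,
    Add 10 10 11,
    Load 10 10,
    Add 8 15 17,
    Mul 8 8 3,
    Add 10 8 10,
    Load 10 10,
    Add 10 10 4,
    Add 10 8 10,
    Load 10 10,
    Add 10 10 4,
    Less 9 10 14,
    Jz 9 62,
    Add 14 10 20,
    Add 15 15 4,
    Jmp 42,
    Add 8 11 12,
    Store 8 14,
    Add 12 12 4,
    Jmp 38,
    Sub 10 13 4,
    Add 10 10 11,
    Load 10 10,
    Add 9 2 4,
    Less 0 10 9,
    Halt]"


lemma row_base_fold: "Suc i * Suc (Suc (length w)) = row_base w i"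
  by (simp add: row_base_def)

lemma fun_upd_bounded_iff:
  "(\<forall>x. f x < (B :: nat)) \<Longrightarrow> (\<forall>x. (f(a := v)) x < B) \<longleftrightarrow> v < B"
  by (metis fun_upd_apply)

lemma and_one_div_exp_nat: "and ((m :: nat) div 2 ^ j) (Suc 0) = (if bit m j then Suc 0 else 0)"
  by (simp add: and_one_eq bit_iff_odd_drop_bit drop_bit_eq_div odd_iff_mod_2_eq_one)

definition base_state :: "nat \<Rightarrow> nat list \<Rightarrow> config \<Rightarrow> bool" where
  "base_state k w c \<longleftrightarrow>
     regs c 1 = k \<and> regs c 2 = length w \<and> regs c 3 = length w + 2 \<and> regs c 4 = 1 \<and>
     regs c 11 = row_base w (Suc k) \<and> regs c 17 = 2 \<and> regs c 20 = 0 \<and>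
     (\<forall>r. regs c r < word_bound k w) \<and> (\<forall>a. mem c a < word_bound k w)"

definition input_stored :: "nat list \<Rightarrow> (nat \<Rightarrow> nat) \<Rightarrow> bool" where
  "input_stored w M \<longleftrightarrow> (\<forall>p < length w. M (p + 2) = w ! p)"

definition rows_stored :: "nat list \<Rightarrow> (nat \<Rightarrow> nat) \<Rightarrow> nat \<Rightarrow> bool" where
  "rows_stored w M i \<longleftrightarrow>
     (\<forall>i' q. 1 \<le> i' \<longrightarrow> i' < i \<longrightarrow> q \<le> length w + 1 \<longrightarrow> M (row_base w i' + q) = next_occ w i' q)"

definition row_suffix_stored :: "nat list \<Rightarrow> (nat \<Rightarrow> nat) \<Rightarrow> nat \<Rightarrow> nat \<Rightarrow> bool" where
  "row_suffix_stored w M i m \<longleftrightarrow>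
     (\<forall>q. m \<le> q \<longrightarrow> q \<le> length w + 1 \<longrightarrow> M (row_base w i + q) = next_occ w i q)"

definition dp_stored :: "nat list \<Rightarrow> nat \<Rightarrow> (nat \<Rightarrow> nat) \<Rightarrow> nat \<Rightarrow> bool" where
  "dp_stored w k M S \<longleftrightarrow> (\<forall>m < S. M (row_base w (Suc k) + m) = shortest_prefix w (mask_symbols m))"

lemma input_stored_upd: "input_stored w M \<Longrightarrow> length w + 2 \<le> a \<Longrightarrow> input_stored w (M(a := v))"
  unfolding input_stored_def by auto

lemma rows_stored_upd:
  assumes "rows_stored w M i" "row_base w i \<le> a"
  shows "rows_stored w (M(a := v)) i"
proof -
  have "row_base w i' + q < a" if "i' < i" "q \<le> length w + 1" for i' q
    using row_base_mono[of "Suc i'" i w] that assms(2) by (simp add: row_base_Suc)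
  then show ?thesis
    using assms(1) unfolding rows_stored_def by fastforce
qed

lemma row_suffix_stored_upd:
  "row_suffix_stored w M i (Suc m) \<Longrightarrow> row_suffix_stored w (M(row_base w i + m := next_occ w i m)) i m"
  unfolding row_suffix_stored_def by (metis Suc_leI add_left_cancel fun_upd_apply le_neq_implies_less)

lemma row_suffix_stored_end:
  "row_suffix_stored w (M(row_base w i + length w := length w, Suc (row_base w i + length w) := length w)) i (length w)"
  unfolding row_suffix_stored_def
proof (intro allI impI)
  fix q assume "length w \<le> q" "q \<le> length w + 1"
  then consider "q = length w" | "q = Suc (length w)" by linarith
  then show "(M(row_base w i + length w := length w, Suc (row_base w i + length w) := length w))
      (row_base w i + q) = next_occ w i q"
    by cases (simp_all add: next_occ_beyond)
qed

lemma rows_stored_Suc: "rows_stored w M i \<Longrightarrow> row_suffix_stored w M i 0 \<Longrightarrow> rows_stored w M (Suc i)"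
  unfolding rows_stored_def row_suffix_stored_def by (metis less_antisym zero_le)

lemma dp_stored_Suc:
  "dp_stored w k M S \<Longrightarrow> dp_stored w k (M(row_base w (Suc k) + S := shortest_prefix w (mask_symbols S))) (Suc S)"
  unfolding dp_stored_def by (simp add: less_Suc_eq)

definition at_row_loop :: "nat \<Rightarrow> nat list \<Rightarrow> config \<Rightarrow> nat \<Rightarrow> bool" where
  "at_row_loop k w c i \<longleftrightarrow> pc c = 8 \<and> base_state k w c \<and> input_stored w (mem c) \<and>
     regs c 5 = i \<and> 1 \<le> i \<and> i \<le> Suc k \<and> rows_stored w (mem c) i"

definition at_scan_loop :: "nat \<Rightarrow> nat list \<Rightarrow> config \<Rightarrow> nat \<Rightarrow> nat \<Rightarrow> bool" where
  "at_scan_loop k w c i m \<longleftrightarrow> pc c = 18 \<and> base_state k w c \<and> input_stored w (mem c) \<and>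
     regs c 5 = i \<and> 1 \<le> i \<and> i \<le> k \<and> regs c 7 = row_base w i \<and> regs c 6 = m \<and> m \<le> length w \<and>
     rows_stored w (mem c) i \<and> row_suffix_stored w (mem c) i m"

definition tables_built :: "nat \<Rightarrow> nat list \<Rightarrow> config \<Rightarrow> bool" where
  "tables_built k w c \<longleftrightarrow> pc c = 35 \<and> base_state k w c \<and> rows_stored w (mem c) (Suc k)"

definition at_mask_loop :: "nat \<Rightarrow> nat list \<Rightarrow> config \<Rightarrow> nat \<Rightarrow> bool" where
  "at_mask_loop k w c S \<longleftrightarrow> pc c = 38 \<and> base_state k w c \<and> rows_stored w (mem c) (Suc k) \<and>
     regs c 13 = 2 ^ k \<and> regs c 12 = S \<and> 1 \<le> S \<and> S \<le> 2 ^ k \<and> dp_stored w k (mem c) S"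

definition at_bit_loop :: "nat \<Rightarrow> nat list \<Rightarrow> config \<Rightarrow> nat \<Rightarrow> nat \<Rightarrow> bool" where
  "at_bit_loop k w c S j \<longleftrightarrow> pc c = 42 \<and> base_state k w c \<and> rows_stored w (mem c) (Suc k) \<and>
     regs c 13 = 2 ^ k \<and> regs c 12 = S \<and> 1 \<le> S \<and> S < 2 ^ k \<and> dp_stored w k (mem c) S \<and>
     regs c 15 = j \<and> j \<le> k \<and> regs c 14 = best_split w S j"

text \<open>Each program segment below is verified by symbolic execution: with the step budget
written as \<open>Suc (\<dots> (Suc 0))\<close>, \<open>runs_to_step\<close> applies once per budgeted step and
\<open>exec_simps\<close> evaluates the instruction.  Products are kept unexpanded so that the
computed addresses fold back into \<open>row_base\<close>.\<close>

context
  notes mult_Suc [simp del] mult_Suc_right [simp del]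
begin

lemmas exec_simps = prog_def halted_def values_bounded_def fun_upd_bounded_iff row_base_fold
  mult_1[where 'a = nat, unfolded One_nat_def]

lemma init_to_row_loop:
  assumes "set w \<subseteq> {1..k}"
  shows "runs_to prog (word_bound k w) 8 (init_config k w) (\<lambda>c. at_row_loop k w c 1)"
proof -
  have small: "k < word_bound k w" "length w < word_bound k w"
    using word_bound_gt[of k w] by (simp_all add: row_base_def)
  have "w ! p < word_bound k w" if "p < length w" for p
    using assms that nth_mem small(1) by fastforce
  then have mem_bounded: "\<forall>a. mem (init_config k w) a < word_bound k w"
    using small by (simp add: init_config_def)
  have init: "pc (init_config k w) = 0" "regs (init_config k w) = (\<lambda>_. 0)"
    "mem (init_config k w) 0 = k" "mem (init_config k w) 1 = length w"
    "input_stored w (mem (init_config k w))"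
    by (simp_all add: init_config_def input_stored_def)
  show ?thesis
    unfolding eval_nat_numeral BitM.simps
    by (insert word_bound_gt[of k w] mem_bounded init,
        (rule runs_to_step, simp_all add: exec_simps)+,
        rule runs_to_done, simp_all add: exec_simps at_row_loop_def base_state_def rows_stored_def)
qed

lemma row_loop_enter:
  assumes "at_row_loop k w c i" "i \<le> k"
  shows "runs_to prog (word_bound k w) 9 c (\<lambda>c'. at_scan_loop k w c' i (length w))"
proof -
  have rows: "row_base w i + length w + 2 \<le> row_base w (Suc k)" "length w + 2 \<le> row_base w i"
    using assms row_base_mono[of "Suc i" "Suc k" w] row_base_ge[of i w]
    by (simp_all add: at_row_loop_def row_base_Suc)
  show ?thesis
    unfolding eval_nat_numeral BitM.simps
    by (insert assms rows word_bound_gt[of k w] row_suffix_stored_end[of w "mem c" i],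
        (rule runs_to_step, simp_all add: exec_simps at_row_loop_def base_state_def)+,
        rule runs_to_done, simp_all add: exec_simps at_scan_loop_def base_state_def
          input_stored_upd rows_stored_upd)
qed

lemma scan_loop_step:
  assumes "at_scan_loop k w c i (Suc m)"
  shows "runs_to prog (word_bound k w) 14 c (\<lambda>c'. at_scan_loop k w c' i m)"
proof -
  note inv = assms[unfolded at_scan_loop_def base_state_def]
  have m: "m < length w" using inv by simp
  have letter: "mem c (Suc (Suc m)) = w ! m" "w ! m < word_bound k w"
    using inv m unfolding input_stored_def by (metis add_2_eq_Suc')+
  have rows: "row_base w i + length w + 2 \<le> row_base w (Suc k)" "length w + 2 \<le> row_base w i"
    using inv row_base_mono[of "Suc i" "Suc k" w] row_base_ge[of i w] by (simp_all add: row_base_Suc)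
  have next_Suc: "mem c (row_base w i + Suc m) = next_occ w i (Suc m)" "next_occ w i (Suc m) \<le> length w"
    using inv m next_occ_le_length unfolding row_suffix_stored_def by auto
  have "i < word_bound k w" using inv word_bound_gt[of k w] by linarith
  then have diffs: "w ! m - i < word_bound k w" "i - w ! m < word_bound k w"
    "i - w ! m + (w ! m - i) < word_bound k w"
    using letter(2) by arith+
  note facts = inv m letter rows next_Suc diffs word_bound_gt[of k w]
    row_suffix_stored_upd[of w "mem c" i m]
  show ?thesis
  proof (cases "w ! m = i")
    case True
    have next_m: "next_occ w i m = m" using m True by (subst next_occ.simps) simp
    have "runs_to prog (word_bound k w) 12 c (\<lambda>c'. at_scan_loop k w c' i m)"
      unfolding eval_nat_numeral BitM.simps
      by (insert facts True next_m, (rule runs_to_step, simp_all add: exec_simps)+,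
          rule runs_to_done, simp_all add: exec_simps at_scan_loop_def base_state_def
            input_stored_upd rows_stored_upd)
    then show ?thesis by (rule runs_to_mono) simp_all
  next
    case False
    then obtain d where dist: "i - w ! m + (w ! m - i) = Suc d"
      by (metis add_is_0 diff_is_0_eq le_antisym not0_implies_Suc)
    have next_m: "next_occ w i m = next_occ w i (Suc m)"
      using m False by (subst next_occ.simps) simp
    show ?thesis
      unfolding eval_nat_numeral BitM.simps
      by (insert facts False dist next_m, (rule runs_to_step, simp_all add: exec_simps)+,
          rule runs_to_done, simp_all add: exec_simps at_scan_loop_def base_state_def
            input_stored_upd rows_stored_upd)
  qed
qed

lemma scan_loop_exit:
  assumes "at_scan_loop k w c i 0"
  shows "runs_to prog (word_bound k w) 3 c (\<lambda>c'. at_row_loop k w c' (Suc i))"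
  unfolding eval_nat_numeral BitM.simps
  by (insert assms word_bound_gt[of k w], (rule runs_to_step, simp_all add: exec_simps at_scan_loop_def base_state_def)+,
      rule runs_to_done, simp_all add: exec_simps at_row_loop_def base_state_def rows_stored_Suc)

lemma row_loop_exit:
  assumes "at_row_loop k w c (Suc k)"
  shows "runs_to prog (word_bound k w) 3 c (tables_built k w)"
  unfolding eval_nat_numeral BitM.simps
  by (insert assms word_bound_gt[of k w],
      (rule runs_to_step, simp_all add: exec_simps at_row_loop_def base_state_def)+,
      rule runs_to_done, simp_all add: exec_simps tables_built_def base_state_def)

lemma tables_to_mask_loop:
  assumes "tables_built k w c"
  shows "runs_to prog (word_bound k w) 3 c (\<lambda>c'. at_mask_loop k w c' 1)"
proof -
  have dp: "dp_stored w k ((mem c)(row_base w (Suc k) := 0)) 1"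
    by (simp add: dp_stored_def mask_symbols_0 shortest_prefix_empty)
  show ?thesis
    unfolding eval_nat_numeral BitM.simps
    by (insert assms word_bound_gt[of k w] dp,
        (rule runs_to_step, simp_all add: exec_simps tables_built_def base_state_def)+,
        rule runs_to_done, simp_all add: exec_simps at_mask_loop_def base_state_def rows_stored_upd)
qed

lemma mask_loop_enter:
  assumes "at_mask_loop k w c S" "S < 2 ^ k"
  shows "runs_to prog (word_bound k w) 4 c (\<lambda>c'. at_bit_loop k w c' S 0)"
  unfolding eval_nat_numeral BitM.simps
  by (insert assms word_bound_gt[of k w],
      (rule runs_to_step, simp_all add: exec_simps at_mask_loop_def base_state_def)+,
      rule runs_to_done, simp_all add: exec_simps at_bit_loop_def base_state_def)

lemma bit_loop_step:
  assumes "at_bit_loop k w c S j" "j < k"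
  shows "runs_to prog (word_bound k w) 22 c (\<lambda>c'. at_bit_loop k w c' S (Suc j))"
proof -
  note inv = assms(1)[unfolded at_bit_loop_def base_state_def]
  have small: "S < word_bound k w" "2 ^ k < word_bound k w" "S div 2 ^ j < word_bound k w"
    "Suc (Suc j) < word_bound k w"
    using inv assms(2) word_bound_gt[of k w] div_le_dividend[of S "2 ^ j"] by linarith+
  note facts = inv assms(2) small word_bound_gt[of k w] and_one_div_exp_nat[of S j]
  show ?thesis
  proof (cases "bit S j")
    case False
    have "runs_to prog (word_bound k w) 7 c (\<lambda>c'. at_bit_loop k w c' S (Suc j))"
      unfolding eval_nat_numeral BitM.simps
      by (insert facts False, (rule runs_to_step, simp_all add: exec_simps)+,
          rule runs_to_done, simp_all add: exec_simps at_bit_loop_def base_state_def)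
    then show ?thesis by (rule runs_to_mono) simp_all
  next
    case True
    define p where "p = shortest_prefix w (mask_symbols (S - 2 ^ j))"
    define a where "a = next_occ w (Suc j) p"
    define b where "b = next_occ w (Suc j) (Suc a)"
    have "2 ^ j \<le> S" using bit_nat_eq_unset_bit_add_exp[OF True] by linarith
    have "S - 2 ^ j < S" using inv by (simp add: diff_less)
    then have mem_p: "mem c (S - 2 ^ j + row_base w (Suc k)) = p"
      using inv unfolding dp_stored_def p_def by (metis add.commute)
    have row: "mem c (row_base w (Suc j) + q) = next_occ w (Suc j) q" if "q \<le> Suc (length w)" for q
      using inv assms(2) that unfolding rows_stored_def by simp
    have "p \<le> Suc (length w)" "a \<le> length w" "b \<le> length w"
      by (simp_all add: p_def a_def b_def shortest_prefix_le next_occ_le_length)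
    then have mem_ab: "mem c (row_base w (Suc j) + p) = a" "mem c (Suc (row_base w (Suc j) + a)) = b"
      using row[of p] row[of "Suc a"] by (simp_all add: a_def b_def)
    have "row_base w (Suc j) + length w + 2 \<le> row_base w (Suc k)"
      using assms(2) row_base_mono[of "Suc (Suc j)" "Suc k" w] by (simp add: row_base_Suc)
    then have bounds: "2 ^ j < word_bound k w" "S - 2 ^ j + row_base w (Suc k) < word_bound k w"
      "row_base w (Suc j) + p < word_bound k w" "Suc (row_base w (Suc j) + a) < word_bound k w"
      "Suc b < word_bound k w"
      using \<open>2 ^ j \<le> S\<close> \<open>p \<le> Suc (length w)\<close> \<open>a \<le> length w\<close> \<open>b \<le> length w\<close> inv
        word_bound_gt(2)[of k w] by linarith+
    have best: "best_split w S (Suc j) = min (best_split w S j) (Suc b)"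
      using True by (simp add: p_def a_def b_def factor_end_def)
    note facts' = facts True mem_p mem_ab bounds best
    show ?thesis
    proof (cases "Suc b < best_split w S j")
      case True
      show ?thesis
        unfolding eval_nat_numeral BitM.simps
        by (insert facts' True, (rule runs_to_step, simp_all add: exec_simps)+,
            rule runs_to_done, simp_all add: exec_simps at_bit_loop_def base_state_def)
    next
      case False
      have "runs_to prog (word_bound k w) 21 c (\<lambda>c'. at_bit_loop k w c' S (Suc j))"
        unfolding eval_nat_numeral BitM.simps
        by (insert facts' False, (rule runs_to_step, simp_all add: exec_simps)+,
            rule runs_to_done, simp_all add: exec_simps at_bit_loop_def base_state_def)
      then show ?thesis by (rule runs_to_mono) simp_all
    qed
  qed
qed

lemma bit_loop_exit:
  assumes "at_bit_loop k w c S k"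
  shows "runs_to prog (word_bound k w) 6 c (\<lambda>c'. at_mask_loop k w c' (Suc S))"
proof -
  note inv = assms[unfolded at_bit_loop_def base_state_def]
  have "best_split w S k = shortest_prefix w (mask_symbols S)"
    using inv by (simp add: best_split_eq_shortest_prefix)
  then have dp: "dp_stored w k ((mem c)(row_base w (Suc k) + S := best_split w S k)) (Suc S)"
    using inv dp_stored_Suc by simp
  have small: "row_base w (Suc k) + S < word_bound k w" "Suc S < word_bound k w"
    using inv word_bound_gt[of k w] by linarith+
  have best: "best_split w S k < word_bound k w"
    using inv by metis
  show ?thesis
    unfolding eval_nat_numeral BitM.simps
    by (insert inv dp small best word_bound_gt[of k w], (rule runs_to_step, simp_all add: exec_simps)+,
        rule runs_to_done, simp_all add: exec_simps at_mask_loop_def base_state_def rows_stored_upd)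
qed

lemma mask_loop_exit:
  assumes "at_mask_loop k w c (2 ^ k)"
  shows "runs_to prog (word_bound k w) 7 c
    (\<lambda>c'. halted prog c' \<and> regs c' 0 = (if disjoint_factors k w then 1 else 0))"
proof -
  note inv = assms[unfolded at_mask_loop_def base_state_def]
  have "2 ^ k - 1 < (2 :: nat) ^ k" by simp
  then have "mem c (row_base w (Suc k) + (2 ^ k - 1)) = shortest_prefix w {1..k}"
    using inv mask_symbols_full[of k] unfolding dp_stored_def by metis
  then have full: "mem c (2 ^ k - Suc 0 + row_base w (Suc k)) = shortest_prefix w {1..k}"
    by (simp add: add.commute)
  have small: "2 ^ k - Suc 0 + row_base w (Suc k) < word_bound k w" "Suc (length w) < word_bound k w"
    "shortest_prefix w {1..k} < word_bound k w"
    using word_bound_gt[of k w] row_base_ge[of "Suc k" w] shortest_prefix_le[of w "{1..k}"]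
    by linarith+
  note facts = inv full small word_bound_gt[of k w] disjoint_factors_iff_shortest_prefix[of k w]
  show ?thesis
    unfolding eval_nat_numeral BitM.simps
    by (cases "disjoint_factors k w"; (insert facts, (rule runs_to_step, simp_all add: exec_simps)+,
        rule runs_to_done, simp_all add: exec_simps))
qed

end

section \<open>Correctness and running time\<close>

lemma scan_loop:
  "at_scan_loop k w c i m \<Longrightarrow>
    runs_to prog (word_bound k w) (14 * m + 3) c (\<lambda>c'. at_row_loop k w c' (Suc i))"
  by (rule runs_to_loop[where I = "\<lambda>m c. at_scan_loop k w c i m"])
    (simp_all add: scan_loop_step scan_loop_exit)

lemma row_loop:
  assumes "at_row_loop k w c i"
  shows "runs_to prog (word_bound k w) ((14 * length w + 12) * (Suc k - i) + 3) c (tables_built k w)"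
proof (rule runs_to_loop_upto[where I = "\<lambda>i c. at_row_loop k w c i"])
  fix i c assume "i < Suc k" "at_row_loop k w c i"
  then have "runs_to prog (word_bound k w) (9 + (14 * length w + 3)) c (\<lambda>c'. at_row_loop k w c' (Suc i))"
    by (intro runs_to_trans[OF row_loop_enter scan_loop]) simp_all
  then show "runs_to prog (word_bound k w) (14 * length w + 12) c (\<lambda>c'. at_row_loop k w c' (Suc i))"
    by (rule runs_to_mono) simp_all
next
  show "i \<le> Suc k" using assms by (simp add: at_row_loop_def)
qed (simp_all add: assms row_loop_exit)

lemma bit_loop:
  assumes "at_bit_loop k w c S j"
  shows "runs_to prog (word_bound k w) (22 * (k - j) + 6) c (\<lambda>c'. at_mask_loop k w c' (Suc S))"
proof (rule runs_to_loop_upto[where I = "\<lambda>j c. at_bit_loop k w c S j"])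
  show "j \<le> k" using assms by (simp add: at_bit_loop_def)
qed (simp_all add: assms bit_loop_step bit_loop_exit)

lemma mask_loop:
  assumes "at_mask_loop k w c S"
  shows "runs_to prog (word_bound k w) ((22 * k + 10) * (2 ^ k - S) + 7) c
    (\<lambda>c'. halted prog c' \<and> regs c' 0 = (if disjoint_factors k w then 1 else 0))"
proof (rule runs_to_loop_upto[where I = "\<lambda>S c. at_mask_loop k w c S"])
  fix S c assume "S < 2 ^ k" "at_mask_loop k w c S"
  then have "runs_to prog (word_bound k w) (4 + (22 * (k - 0) + 6)) c (\<lambda>c'. at_mask_loop k w c' (Suc S))"
    by (intro runs_to_trans[OF mask_loop_enter bit_loop])
  then show "runs_to prog (word_bound k w) (22 * k + 10) c (\<lambda>c'. at_mask_loop k w c' (Suc S))"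
    by (rule runs_to_mono) simp_all
next
  show "S \<le> 2 ^ k" using assms by (simp add: at_mask_loop_def)
qed (simp_all add: assms mask_loop_exit)

lemma running_time_le:
  "8 + (((14 * n + 12) * k + 3) + (3 + ((22 * k + 10) * (2 ^ k - 1) + 7)))
     \<le> 100 * (k * 2 ^ k + k * n) + (100 :: nat)"
proof -
  have "(22 * k + 10) * (2 ^ k - 1) \<le> 22 * (k * 2 ^ k) + 10 * 2 ^ k"
    by (simp add: algebra_simps)
  moreover have "(14 * n + 12) * k = 14 * (k * n) + 12 * k"
    by (simp add: algebra_simps)
  moreover have "2 ^ k \<le> k * 2 ^ k + 1" "k \<le> k * 2 ^ k"
    by (cases k) simp_all
  ultimately show ?thesis
    by (simp only: distrib_left)
qed

lemma prog_correct:
  assumes "set w \<subseteq> {1..k}"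
  shows "runs_to prog (word_bound k w) (100 * (k * 2 ^ k + k * length w) + 100) (init_config k w)
    (\<lambda>c. halted prog c \<and> regs c 0 = (if disjoint_factors k w then 1 else 0))"
    (is "runs_to _ _ _ _ ?answer")
proof -
  have table_phase: "runs_to prog (word_bound k w) (3 + ((22 * k + 10) * (2 ^ k - 1) + 7)) c ?answer"
    if "tables_built k w c" for c
    using tables_to_mask_loop[OF that] mask_loop by (rule runs_to_trans)
  have "runs_to prog (word_bound k w)
      (((14 * length w + 12) * k + 3) + (3 + ((22 * k + 10) * (2 ^ k - 1) + 7))) c ?answer"
    if "at_row_loop k w c 1" for c
    using runs_to_trans[OF row_loop[OF that] table_phase] by simp
  with init_to_row_loop[OF assms] have "runs_to prog (word_bound k w)
      (8 + (((14 * length w + 12) * k + 3) + (3 + ((22 * k + 10) * (2 ^ k - 1) + 7))))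
      (init_config k w) ?answer"
    by (rule runs_to_trans)
  then show ?thesis
    using running_time_le by (rule runs_to_mono)
qed

theorem corollary27:
  shows "\<exists>(P :: instr list) (C :: nat).
    \<forall>(k :: nat) (w :: nat list). set w \<subseteq> {1..k} \<longrightarrow>
      (\<exists>t. t \<le> C * (k * 2 ^ k + k * length w) + C \<and>
           halted P (run P t (init_config k w)) \<and>
           regs (run P t (init_config k w)) 0 = (if disjoint_factors k w then 1 else 0) \<and>
           (\<forall>j\<le>t. values_bounded ((2 + length w + 2 ^ k) ^ C) (run P j (init_config k w))))"
proof (rule exI[of _ prog], rule exI[of _ 100], intro allI impI)
  fix k :: nat and w :: "nat list"
  assume "set w \<subseteq> {1..k}"
  then show "\<exists>t. t \<le> 100 * (k * 2 ^ k + k * length w) + 100 \<and>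
      halted prog (run prog t (init_config k w)) \<and>
      regs (run prog t (init_config k w)) 0 = (if disjoint_factors k w then 1 else 0) \<and>
      (\<forall>j\<le>t. values_bounded ((2 + length w + 2 ^ k) ^ 100) (run prog j (init_config k w)))"
    using prog_correct unfolding runs_to_def word_bound_def by blast
qed

end
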